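(* Let $h>0$ and $1>\theta_1>\theta_2>0$, and let $\Theta\in\mathbb{R}^{2\times2}$ be given by \[ \Theta=\frac{1}{4h}\begin{pmatrix}\cot(\pi\theta_1)&\cot\left(\pi\frac{\theta_1+\theta_2}{2}\right)-\cot\left(\pi\frac{\theta_1-\theta_2}{2}\right)\\ \cot\left(\pi\frac{\theta_1+\theta_2}{2}\right)-\cot\left(\pi\frac{\theta_2-\theta_1}{2}\right)&\cot(\pi\theta_2)\end{pmatrix}. \] (i) If $\theta_1\le1/2$, then $\Theta$ is invertible for all $\theta_2\in(0,\theta_1)$. (ii) If $\theta_1>1/2$, then $\Theta$ is invertible for all $\theta_2\in(0,\theta_1)$ except for exactly one value $\hat\theta_2(\theta_1)$, which lies in $(0,1/2)$. The graph of $\hat\theta_2:(1/2,1)\to(0,1/2)$ is the image of the curve \[ (\pi/4,3\pi/4)\to(1/2,1)\times(0,1/2),\qquad t\mapsto\bigl((t+f(t))/\pi,\,(t-f(t))/\pi\bigr), \] where $f(x)=\operatorname{arccot}\left(\sqrt{\tfrac12\left(\cot(x)^2+\sqrt{4-3\cot(x)^4}\right)}\right)$ for $x\in(\pi/4,3\pi/4)$. *)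

theory Defs
  imports "HOL-Analysis.Analysis"
begin

definition arccot :: "real \<Rightarrow> real" where
  "arccot x = pi / 2 - arctan x"

text \<open>The 2x2 matrix Theta (rows listed first).\<close>
definition Theta :: "real \<Rightarrow> real \<Rightarrow> real \<Rightarrow> real^2^2" where
  "Theta h t1 t2 = (1 / (4 * h)) *\<^sub>R vector [
     vector [cot (pi * t1),
             cot (pi * ((t1 + t2) / 2)) - cot (pi * ((t1 - t2) / 2))],
     vector [cot (pi * ((t1 + t2) / 2)) - cot (pi * ((t2 - t1) / 2)),
             cot (pi * t2)]]"

definition fcurve :: "real \<Rightarrow> real" where
  "fcurve x = arccot (sqrt ((1/2) * ((cot x)^2 + sqrt (4 - 3 * (cot x)^4))))"

end

theory Submission
  imports Defs
begin

text \<open>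
  Put \<open>u = \<pi>(t1 + t2)/2\<close> and \<open>v = \<pi>(t1 - t2)/2\<close>. The cotangent addition formulas give
  \<open>det \<Theta> = (X\<^sup>2 - X Y + Y\<^sup>2 - 1) / (16 h\<^sup>2 (Y - X))\<close> with \<open>X = cot\<^sup>2 u\<close>, \<open>Y = cot\<^sup>2 v\<close>,
  and in the variables \<open>x = cos (\<pi> t1)\<close>, \<open>y = cos (\<pi> t2)\<close> the same numerator is a positive
  multiple of \<open>x y (x - y)\<^sup>2 + 4 (1 - x\<^sup>2) (1 - y\<^sup>2)\<close>.
  The latter is positive whenever \<open>x y \<ge> 0\<close>: this gives (i) and, for \<open>t1 > 1/2\<close>, i.e. \<open>x < 0\<close>,
  forces \<open>y > 0\<close>, i.e. \<open>t2 < 1/2\<close>. For \<open>x < 0\<close> it is strictly decreasing in \<open>y \<ge> 0\<close> and changes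
  sign on \<open>[0, 1]\<close>, so exactly one \<open>t2\<close> is singular.
  For \<open>u \<in> (\<pi>/4, 3\<pi>/4)\<close> we have \<open>X < 1\<close>, and then the ellipse \<open>X\<^sup>2 - X Y + Y\<^sup>2 = 1\<close> forces
  \<open>Y \<ge> X\<close>, so \<open>Y\<close> is its larger root \<open>(X + \<surd>(4 - 3 X\<^sup>2))/2\<close>; that is, \<open>v = f u\<close>, which is (iii).
\<close>

lemma
  assumes "sin u \<noteq> 0" "sin v \<noteq> 0"
  shows sin_add_cot: "sin (u + v) = sin u * sin v * (cot u + cot v)"
    and sin_diff_cot: "sin (u - v) = sin u * sin v * (cot v - cot u)"
    and cos_add_cot: "cos (u + v) = sin u * sin v * (cot u * cot v - 1)"
    and cos_diff_cot: "cos (u - v) = sin u * sin v * (cot u * cot v + 1)"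
  using assms by (simp_all add: sin_add sin_diff cos_add cos_diff cot_def field_simps)

lemma cot_add_cot_diff:
  assumes "sin u \<noteq> 0" "sin v \<noteq> 0"
  shows "cot (u + v) * cot (u - v) = ((cot u * cot v)^2 - 1) / ((cot v)^2 - (cot u)^2)"
proof -
  have "cot (u + v) * cot (u - v) = cos (u + v) * cos (u - v) / (sin (u + v) * sin (u - v))"
    by (simp add: cot_def)
  also have "\<dots> = (sin u * sin v)^2 * ((cot u * cot v)^2 - 1)
                      / ((sin u * sin v)^2 * ((cot v)^2 - (cot u)^2))"
    using assms by (simp add: sin_add_cot sin_diff_cot cos_add_cot cos_diff_cot power2_eq_square algebra_simps)
  also have "\<dots> = ((cot u * cot v)^2 - 1) / ((cot v)^2 - (cot u)^2)"
    using assms by simp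
  finally show ?thesis .
qed

lemma sin_half_angles_pos:
  assumes "0 < v" "v < u" "u + v < pi"
  shows "0 < sin u" "0 < sin v" "0 < sin (u + v)" "0 < sin (u - v)"
  using assms by (auto intro!: sin_gt_zero)

lemma cos_squared_less_one: "0 < a \<Longrightarrow> a < pi \<Longrightarrow> (cos a)^2 < 1"
  using sin_gt_zero[of a] by (simp add: cos_squared_eq)

lemma
  assumes "0 \<le> t" "t \<le> 1"
  shows cos_pi_mult_neg_iff: "cos (pi * t) < 0 \<longleftrightarrow> 1/2 < t"
    and cos_pi_mult_pos_iff: "0 < cos (pi * t) \<longleftrightarrow> t < 1/2"
  using assms cos_mono_less_eq[of "pi * t" "pi/2"] cos_mono_less_eq[of "pi/2" "pi * t"] by auto

lemma cot_squared_less_one: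
  assumes "pi/4 < t" "t < 3*pi/4"
  shows "(cot t)^2 < 1"
proof -
  have "0 < cos (2 * t - pi)"
    using assms by (intro cos_gt_zero_pi) auto
  then have "(cos t)^2 < (sin t)^2"
    by (simp add: cos_double)
  moreover have "0 < sin t"
    using assms by (intro sin_gt_zero) auto
  ultimately show ?thesis
    by (simp add: cot_def power_divide)
qed

lemma arccot_cot: "0 < v \<Longrightarrow> v < pi \<Longrightarrow> arccot (cot v) = v"
  unfolding arccot_def by (simp flip: tan_cot' add: arctan_tan)

definition cot_form :: "real \<Rightarrow> real \<Rightarrow> real" where
  "cot_form X Y = X^2 - X * Y + Y^2 - 1"

lemma cot_form_eq_zero_iff:
  assumes "0 \<le> X" "X < 1" "0 \<le> Y"
  shows "cot_form X Y = 0 \<longleftrightarrow> Y = (1/2) * (X + sqrt (4 - 3 * X^2))"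
proof
  assume zero: "cot_form X Y = 0"
  have "X \<le> Y"
  proof (rule ccontr)
    assume "\<not> X \<le> Y"
    then have "0 \<le> Y * (X - Y)" "X^2 < 1"
      using assms by (simp_all add: abs_square_less_1)
    moreover have "cot_form X Y = (X^2 - 1) - Y * (X - Y)"
      by (simp add: cot_form_def power2_eq_square algebra_simps)
    ultimately show False
      using zero by linarith
  qed
  moreover have "(2 * Y - X)^2 = 4 - 3 * X^2"
    using zero by (simp add: cot_form_def power2_eq_square algebra_simps)
  ultimately have "sqrt (4 - 3 * X^2) = 2 * Y - X"
    using assms by (intro real_sqrt_unique) auto
  then show "Y = (1/2) * (X + sqrt (4 - 3 * X^2))"
    by simp
next
  assume Y: "Y = (1/2) * (X + sqrt (4 - 3 * X^2))"
  have "X^2 \<le> 1"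
    using assms by (simp add: power_le_one)
  then have "(sqrt (4 - 3 * X^2))^2 = 4 - 3 * X^2"
    by simp
  then show "cot_form X Y = 0"
    unfolding cot_form_def Y by (simp add: power2_eq_square algebra_simps) (simp add: field_simps)
qed

lemma det_factor_eq_cot_form:
  assumes "sin u \<noteq> 0" "sin v \<noteq> 0" "(cot u)^2 \<noteq> (cot v)^2"
  shows "cot (u + v) * cot (u - v) - (cot u - cot v) * (cot u + cot v)
           = cot_form ((cot u)^2) ((cot v)^2) / ((cot v)^2 - (cot u)^2)"
  using assms unfolding cot_add_cot_diff[OF assms(1,2)] cot_form_def
  by (simp add: field_simps) (simp add: power2_eq_square power4_eq_xxxx algebra_simps)

definition cos_form :: "real \<Rightarrow> real \<Rightarrow> real" where
  "cos_form x y = x * y * (x - y)^2 + 4 * (1 - x^2) * (1 - y^2)"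

lemma cos_form_eq_cot_form:
  assumes "sin u \<noteq> 0" "sin v \<noteq> 0"
  shows "cos_form (cos (u + v)) (cos (u - v)) = 4 * (sin u * sin v)^4 * cot_form ((cot u)^2) ((cot v)^2)"
proof -
  have sq: "1 - (cos (u + v))^2 = (sin u * sin v * (cot u + cot v))^2"
       "1 - (cos (u - v))^2 = (sin u * sin v * (cot v - cot u))^2"
    by (simp_all flip: sin_add_cot[OF assms] sin_diff_cot[OF assms] add: sin_squared_eq)
  show ?thesis
    unfolding cos_form_def sq unfolding cot_form_def cos_add_cot[OF assms] cos_diff_cot[OF assms]
    by (simp add: power2_eq_square power4_eq_xxxx algebra_simps)
qed

lemma cos_form_pos:
  assumes "0 \<le> x * y" "x^2 < 1" "y^2 < 1"
  shows "0 < cos_form x y"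
  using assms unfolding cos_form_def by (simp add: add_nonneg_pos)

lemma cos_form_strict_antimono:
  assumes "x < 0" "x^2 < 1" "0 \<le> y" "y < y'"
  shows "cos_form x y' < cos_form x y"
proof -
  have "(y - x)^2 \<le> (y' - x)^2"
    using assms by (intro power_mono) auto
  then have "y * (x - y)^2 \<le> y' * (x - y')^2"
    using assms by (simp add: power2_commute[of x] mult_mono)
  then have "x * y' * (x - y')^2 \<le> x * y * (x - y)^2"
    using mult_left_mono_neg[of _ _ x] assms(1) by (simp add: mult.assoc)
  moreover have "(1 - x^2) * (1 - y'^2) < (1 - x^2) * (1 - y^2)"
    using assms by (intro mult_strict_left_mono) (auto intro: power_strict_mono)
  ultimately show ?thesis
    unfolding cos_form_def by linarith
qed

lemma cos_form_unique_root:
  assumes "x < 0" "x^2 < 1"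
  shows "\<exists>!y. 0 < y \<and> y < 1 \<and> cos_form x y = 0"
proof (rule ex_ex1I)
  have "cos_form x 1 \<le> 0" "0 \<le> cos_form x 0"
    using assms by (simp_all add: cos_form_def mult_nonpos_nonneg)
  moreover have "continuous_on {0..1} (cos_form x)"
    unfolding cos_form_def by (intro continuous_intros)
  ultimately obtain y where "0 \<le> y" "y \<le> 1" "cos_form x y = 0"
    using IVT2' by (metis zero_le_one)
  moreover have "cos_form x 0 \<noteq> 0" "cos_form x 1 \<noteq> 0"
    using assms by (simp_all add: cos_form_def)
  ultimately show "\<exists>y. 0 < y \<and> y < 1 \<and> cos_form x y = 0"
    by (metis order_le_less)
next
  fix y y' assume "0 < y \<and> y < 1 \<and> cos_form x y = 0" "0 < y' \<and> y' < 1 \<and> cos_form x y' = 0"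
  then show "y = y'"
    using cos_form_strict_antimono[OF assms] by (metis less_le_not_le linorder_neqE_linordered_idom)
qed

lemma fcurve_eq_iff:
  assumes "pi/4 < t" "t < 3*pi/4" "0 < v" "v < pi/2"
  shows "fcurve t = v \<longleftrightarrow> cot_form ((cot t)^2) ((cot v)^2) = 0"
proof -
  define X where "X = (cot t)^2"
  have X: "0 \<le> X" "X < 1" "(cot t)^4 = X^2"
    using cot_squared_less_one[OF assms(1,2)] by (simp_all add: X_def flip: power_mult)
  have "fcurve t = arccot (sqrt ((1/2) * (X + sqrt (4 - 3 * X^2))))"
    unfolding fcurve_def X(3) X_def[symmetric] ..
  then have "fcurve t = v \<longleftrightarrow> arccot (sqrt ((1/2) * (X + sqrt (4 - 3 * X^2)))) = arccot (cot v)"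
    using assms by (simp add: arccot_cot)
  also have "\<dots> \<longleftrightarrow> sqrt ((1/2) * (X + sqrt (4 - 3 * X^2))) = sqrt ((cot v)^2)"
    using cot_gt_zero[OF assms(3,4)] by (simp add: arccot_def arctan_eq_iff)
  also have "\<dots> \<longleftrightarrow> (cot v)^2 = (1/2) * (X + sqrt (4 - 3 * X^2))"
    by (simp only: real_sqrt_eq_iff eq_commute)
  also have "\<dots> \<longleftrightarrow> cot_form X ((cot v)^2) = 0"
    using cot_form_eq_zero_iff[OF X(1,2)] by simp
  finally show ?thesis
    by (simp add: X_def)
qed

lemma fcurve_bounds:
  assumes "pi/4 < t" "t < 3*pi/4"
  shows "0 < fcurve t" "fcurve t \<le> pi/4"
proof -
  define X where "X = (cot t)^2"
  have X: "0 \<le> X" "X < 1" "(cot t)^4 = X^2"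
    using cot_squared_less_one[OF assms] by (simp_all add: X_def flip: power_mult)
  have "2 - X \<le> sqrt (4 - 3 * X^2)"
    using X by (intro real_le_rsqrt) (simp add: power2_eq_square algebra_simps mult_left_le_one_le)
  then have "1 \<le> sqrt ((1/2) * (X + sqrt (4 - 3 * X^2)))"
    by simp
  then have "pi/4 \<le> arctan (sqrt ((1/2) * (X + sqrt (4 - 3 * X^2))))"
    by (metis arctan_le_iff arctan_one)
  moreover have "fcurve t = pi/2 - arctan (sqrt ((1/2) * (X + sqrt (4 - 3 * X^2))))"
    unfolding fcurve_def arccot_def X(3) X_def[symmetric] ..
  ultimately show "0 < fcurve t" "fcurve t \<le> pi/4"
    using arctan_ubound by simp_all
qed

lemma det_Theta_half_angles:
  "det (Theta h ((u + v) / pi) ((u - v) / pi))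
     = (cot (u + v) * cot (u - v) - (cot u - cot v) * (cot u + cot v)) / (4 * h)^2"
proof -
  have angles: "pi * ((u + v) / pi) = u + v" "pi * ((u - v) / pi) = u - v"
      "pi * (((u + v) / pi + (u - v) / pi) / 2) = u" "pi * (((u + v) / pi - (u - v) / pi) / 2) = v"
      "pi * (((u - v) / pi - (u + v) / pi) / 2) = - v"
    by (simp_all add: field_simps)
  show ?thesis
    unfolding Theta_def det_2 angles
    by (simp add: power2_eq_square field_simps) (simp add: algebra_simps flip: add_divide_distrib)
qed

lemma Theta_singular_iff_cot_form:
  assumes "h \<noteq> 0" "0 < v" "v < u" "u + v < pi"
  shows "\<not> invertible (Theta h ((u + v) / pi) ((u - v) / pi)) \<longleftrightarrow> cot_form ((cot u)^2) ((cot v)^2) = 0"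
proof -
  note sin_pos = sin_half_angles_pos[OF assms(2-4)]
  then have "sin u * sin v * (cot u + cot v) \<noteq> 0" "sin u * sin v * (cot v - cot u) \<noteq> 0"
    by (simp_all flip: sin_add_cot sin_diff_cot)
  moreover have "(cot v)^2 - (cot u)^2 = (cot u + cot v) * (cot v - cot u)"
    by (simp add: power2_eq_square algebra_simps)
  ultimately have "(cot v)^2 - (cot u)^2 \<noteq> 0"
    by simp
  then show ?thesis
    using assms(1) sin_pos
    by (simp add: invertible_det_nz det_Theta_half_angles det_factor_eq_cot_form)
qed

lemma Theta_singular_iff_cos_form:
  assumes "h \<noteq> 0" "0 < t2" "t2 < t1" "t1 < 1"
  shows "\<not> invertible (Theta h t1 t2) \<longleftrightarrow> cos_form (cos (pi * t1)) (cos (pi * t2)) = 0"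
proof -
  define u v where "u = pi * ((t1 + t2) / 2)" and "v = pi * ((t1 - t2) / 2)"
  have uv: "u + v = pi * t1" "u - v = pi * t2"
    by (simp_all add: u_def v_def field_simps)
  have angles: "0 < v" "v < u" "u + v < pi"
    using assms by (simp_all add: u_def v_def flip: distrib_left add_divide_distrib)
  have "\<not> invertible (Theta h t1 t2) \<longleftrightarrow> cot_form ((cot u)^2) ((cot v)^2) = 0"
    using Theta_singular_iff_cot_form[OF assms(1) angles] by (simp add: uv)
  also have "\<dots> \<longleftrightarrow> cos_form (cos (u + v)) (cos (u - v)) = 0"
    using sin_half_angles_pos[OF angles] by (simp add: cos_form_eq_cot_form)
  finally show ?thesis
    by (simp add: uv)
qed

lemma Theta_invertible_if_le_half:
  assumes "h \<noteq> 0" "t1 \<le> 1/2" "0 < t2" "t2 < t1"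
  shows "invertible (Theta h t1 t2)"
proof -
  have "0 \<le> cos (pi * t1)" "0 \<le> cos (pi * t2)"
    using assms cos_pi_mult_neg_iff[of t1] cos_pi_mult_neg_iff[of t2] by auto
  moreover have "(cos (pi * t1))^2 < 1" "(cos (pi * t2))^2 < 1"
    using assms by (simp_all add: cos_squared_less_one)
  ultimately have "cos_form (cos (pi * t1)) (cos (pi * t2)) \<noteq> 0"
    using cos_form_pos by (metis less_irrefl zero_le_mult_iff)
  then show ?thesis
    using Theta_singular_iff_cos_form assms by force
qed

lemma Theta_singular_iff_cos_root:
  assumes "h \<noteq> 0" "1/2 < t1" "t1 < 1"
  shows "0 < t2 \<and> t2 < t1 \<and> \<not> invertible (Theta h t1 t2)
           \<longleftrightarrow> 0 < t2 \<and> t2 < 1/2 \<and> cos_form (cos (pi * t1)) (cos (pi * t2)) = 0"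
proof -
  have "cos (pi * t1) < 0" "(cos (pi * t1))^2 < 1"
    using assms cos_pi_mult_neg_iff[of t1] by (simp_all add: cos_squared_less_one)
  moreover have "(cos (pi * t2))^2 < 1" if "0 < t2" "t2 < 1"
    using that by (simp add: cos_squared_less_one)
  ultimately have "cos_form (cos (pi * t1)) (cos (pi * t2)) \<noteq> 0" if "0 < t2" "1/2 \<le> t2" "t2 < 1"
    using that cos_form_pos[of "cos (pi * t1)" "cos (pi * t2)"] cos_pi_mult_pos_iff[of t2]
    by (simp add: mult_nonpos_nonpos)
  then show ?thesis
    using Theta_singular_iff_cos_form[OF assms(1), of t2 t1] assms by fastforce
qed

lemma Theta_unique_singular_second_angle:
  assumes "h \<noteq> 0" "1/2 < t1" "t1 < 1"
  shows "\<exists>!t2. 0 < t2 \<and> t2 < t1 \<and> \<not> invertible (Theta h t1 t2)"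
proof -
  have "cos (pi * t1) < 0" "(cos (pi * t1))^2 < 1"
    using assms cos_pi_mult_neg_iff[of t1] by (simp_all add: cos_squared_less_one)
  then obtain y where y: "0 < y" "y < 1" "cos_form (cos (pi * t1)) y = 0"
    and y_unique: "\<And>y'. 0 < y' \<Longrightarrow> y' < 1 \<Longrightarrow> cos_form (cos (pi * t1)) y' = 0 \<Longrightarrow> y' = y"
    using cos_form_unique_root by metis
  have cos_root: "0 < t2 \<and> t2 < 1/2 \<and> cos_form (cos (pi * t1)) (cos (pi * t2)) = 0
                    \<longleftrightarrow> t2 = arccos y / pi" for t2
  proof
    assume t2: "0 < t2 \<and> t2 < 1/2 \<and> cos_form (cos (pi * t1)) (cos (pi * t2)) = 0"
    moreover have "0 < cos (pi * t2)" "cos (pi * t2) < 1"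
      using t2 cos_pi_mult_pos_iff[of t2] cos_squared_less_one[of "pi * t2"] by (auto simp: abs_square_less_1)
    ultimately have "cos (pi * t2) = y"
      using y_unique by blast
    then show "t2 = arccos y / pi"
      using t2 arccos_cos[of "pi * t2"] by simp
  next
    assume "t2 = arccos y / pi"
    then have "cos (pi * t2) = y" "0 < t2" "t2 \<le> 1"
      using y arccos_lt_bounded[of y] by auto
    then show "0 < t2 \<and> t2 < 1/2 \<and> cos_form (cos (pi * t1)) (cos (pi * t2)) = 0"
      using y cos_pi_mult_pos_iff[of t2] by auto
  qed
  show ?thesis
    unfolding Theta_singular_iff_cos_root[OF assms] cos_root by simp
qed

lemma Theta_singular_set_eq_fcurve_image:
  assumes "h \<noteq> 0"
  shows "{(t1, t2). 1/2 < t1 \<and> t1 < 1 \<and> 0 < t2 \<and> t2 < t1 \<and> \<not> invertible (Theta h t1 t2)}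
           = (\<lambda>t. ((t + fcurve t) / pi, (t - fcurve t) / pi)) ` {pi/4<..<3*pi/4}"
    (is "?S = ?curve ` _")
proof (intro equalityI subsetI)
  fix z assume "z \<in> ?S"
  then obtain t1 t2 where z: "z = (t1, t2)" and t: "1/2 < t1" "t1 < 1" "0 < t2" "t2 < t1"
    and singular: "\<not> invertible (Theta h t1 t2)"
    by blast
  have "t2 < 1/2"
    using Theta_singular_iff_cos_root[OF assms t(1,2)] t singular by blast
  define u v where "u = pi * ((t1 + t2) / 2)" and "v = pi * ((t1 - t2) / 2)"
  have uv: "t1 = (u + v) / pi" "t2 = (u - v) / pi"
    by (simp_all add: u_def v_def field_simps)
  have u: "pi/4 < u" "u < 3*pi/4" and v: "0 < v" "v < pi/2"
    using t \<open>t2 < 1/2\<close> by (simp_all add: u_def v_def)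
  have "v < u" "u + v < pi"
    using t by (simp_all add: u_def v_def flip: distrib_left add_divide_distrib)
  then have "cot_form ((cot u)^2) ((cot v)^2) = 0"
    using Theta_singular_iff_cot_form[OF assms v(1)] singular by (simp add: uv)
  then have "fcurve u = v"
    using fcurve_eq_iff[OF u v] by simp
  then show "z \<in> ?curve ` {pi/4<..<3*pi/4}"
    using u by (auto simp: z uv)
next
  fix z assume "z \<in> ?curve ` {pi/4<..<3*pi/4}"
  then obtain u where z: "z = ?curve u" and u: "pi/4 < u" "u < 3*pi/4"
    by auto
  define v where "v = fcurve u"
  have v: "0 < v" "v \<le> pi/4"
    using fcurve_bounds[OF u] by (simp_all add: v_def)
  have angles: "0 < v" "v < u" "u + v < pi"
    using u v by simp_all
  have "cot_form ((cot u)^2) ((cot v)^2) = 0"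
    using fcurve_eq_iff[OF u, of v] v by (simp add: v_def)
  then have singular: "\<not> invertible (Theta h ((u + v) / pi) ((u - v) / pi))"
    using Theta_singular_iff_cot_form[OF assms angles] by simp
  moreover have bounds: "0 < (u - v) / pi" "(u - v) / pi < (u + v) / pi" "(u + v) / pi < 1"
    using angles by (simp_all add: divide_strict_right_mono)
  moreover have "1/2 < (u + v) / pi"
    using Theta_invertible_if_le_half[OF assms _ bounds(1,2)] singular by linarith
  ultimately show "z \<in> ?S"
    by (simp add: z v_def)
qed

theorem proposition5p2:
  fixes h :: real
  assumes "h > 0"
  shows "(\<forall>t1 t2. t1 < 1 \<and> t1 \<le> 1/2 \<and> 0 < t2 \<and> t2 < t1 \<longrightarrow> invertible (Theta h t1 t2))
       \<and> (\<forall>t1. 1/2 < t1 \<and> t1 < 1 \<longrightarrow>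
            (\<exists>!t2. 0 < t2 \<and> t2 < t1 \<and> \<not> invertible (Theta h t1 t2))
          \<and> (\<forall>t2. 0 < t2 \<and> t2 < t1 \<and> \<not> invertible (Theta h t1 t2) \<longrightarrow> t2 < 1/2))
       \<and> {(t1, t2). 1/2 < t1 \<and> t1 < 1 \<and> 0 < t2 \<and> t2 < t1 \<and> \<not> invertible (Theta h t1 t2)}
           = (\<lambda>t. ((t + fcurve t) / pi, (t - fcurve t) / pi)) ` {pi/4<..<3*pi/4}"
proof -
  have h: "h \<noteq> 0"
    using assms by simp
  have "t2 < 1/2" if "1/2 < t1" "t1 < 1" "0 < t2 \<and> t2 < t1 \<and> \<not> invertible (Theta h t1 t2)" for t1 t2
    using Theta_singular_iff_cos_root[OF h that(1,2)] that(3) by blast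
  then show ?thesis
    using Theta_invertible_if_le_half[OF h] Theta_unique_singular_second_angle[OF h]
      Theta_singular_set_eq_fcurve_image[OF h]
    by blast
qed

end
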